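(* Let $G$ be a countable group and $\mu$ a symmetric probability measure on $G$ (i.e. $\mu(g)=\mu(g^{-1})$ for all $g$) whose support generates $G$ as a group. Let $(X_1,X_2,\ldots)$ be a $\mu$-random walk on $G$ and, for $n\ge 1$, let $\mathcal{S}_n$ be the semigroup generated by $\{X_n,X_{n+1},\ldots\}$. Fix $n\ge 1$. If almost surely $X_i^{-1}\in\mathcal{S}_n$ for all $i\ge n$, then $\mathcal{S}_n=G$ almost surely.
   Context: A $\mu$-random walk on $G$ is defined by taking $\zeta_1,\zeta_2,\ldots$ i.i.d. with law $\mu$ and setting $X_n=\zeta_1\zeta_2\cdots\zeta_n$. *)

theory Defs
  imports "HOL-Probability.Probability" "HOL-Algebra.Algebra"
begin

text \<open>The sample space is the space of i.i.d. streams (zeta_1, zeta_2, ...) with law mu,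
  i.e. stream_space (measure_pmf mu); the stream element at index k is zeta_(k+1).\<close>

definition rw_pos :: "('a, 'b) monoid_scheme \<Rightarrow> 'a stream \<Rightarrow> nat \<Rightarrow> 'a" where
  "rw_pos G \<omega> n = foldr (\<lambda>x y. x \<otimes>\<^bsub>G\<^esub> y) (stake n \<omega>) \<one>\<^bsub>G\<^esub>"

inductive_set semigroup_gen :: "('a, 'b) monoid_scheme \<Rightarrow> 'a set \<Rightarrow> 'a set"
  for G :: "('a, 'b) monoid_scheme" and S :: "'a set" where
  base: "x \<in> S \<Longrightarrow> x \<in> semigroup_gen G S"
| mult: "x \<in> semigroup_gen G S \<Longrightarrow> y \<in> semigroup_gen G S \<Longrightarrow> x \<otimes>\<^bsub>G\<^esub> y \<in> semigroup_gen G S"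

definition tail_semigroup :: "('a, 'b) monoid_scheme \<Rightarrow> 'a stream \<Rightarrow> nat \<Rightarrow> 'a set" where
  "tail_semigroup G \<omega> n = semigroup_gen G {rw_pos G \<omega> i | i. i \<ge> n}"

end

theory Submission imports Defs begin

text \<open>If the inverse of every position from time n on lies in the semigroup S_n generated by
  those positions, then S_n is closed under inverses and hence a subgroup. It then contains
  every increment zeta_(k+1) = X_k^-1 X_(k+1) with k \<ge> n, and almost surely every atom of mu
  occurs among these increments; since the atoms generate G, S_n = G.\<close>

lemma AE_stream_space_visits:
  fixes \<mu> :: "'a pmf"
  assumes s: "s \<in> set_pmf \<mu>"
  shows "AE \<omega> in stream_space (measure_pmf \<mu>). \<exists>k. \<omega> !! k = s"
proof -
  let ?M = "stream_space (measure_pmf \<mu>)"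
  interpret S: prob_space ?M
    by (rule prob_space.prob_space_stream_space[OF prob_space_measure_pmf])
  define Z where "Z = {\<omega> \<in> space ?M. \<forall>k. \<omega> !! k \<noteq> s}"
  have Z_sets: "Z \<in> sets ?M" unfolding Z_def by measurable
  have Z_Cons: "{x \<in> space ?M. t ## x \<in> Z} = (if t = s then {} else Z)" for t
    unfolding Z_def by (auto simp: space_stream_space Stream_snth split: nat.splits)
  \<comment> \<open>Conditioning on the first letter: P(Z) = P(Z) (1 - mu(s)), with mu(s) > 0.\<close>
  have "emeasure ?M Z = (\<integral>\<^sup>+t. emeasure ?M {x \<in> space ?M. t ## x \<in> Z} \<partial>measure_pmf \<mu>)"
    by (rule prob_space.emeasure_stream_space[OF prob_space_measure_pmf Z_sets])
  also have "\<dots> = (\<integral>\<^sup>+t. emeasure ?M Z * indicator (UNIV - {s}) t \<partial>measure_pmf \<mu>)"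
    by (intro nn_integral_cong) (simp add: Z_Cons)
  also have "\<dots> = emeasure ?M Z * emeasure (measure_pmf \<mu>) (UNIV - {s})"
    by (simp add: nn_integral_cmult_indicator)
  finally have "measure ?M Z = measure ?M Z * measure (measure_pmf \<mu>) (UNIV - {s})"
    by (simp add: S.emeasure_eq_measure measure_pmf.emeasure_eq_measure ennreal_mult'[symmetric])
  moreover have "measure (measure_pmf \<mu>) (UNIV - {s}) = 1 - pmf \<mu> s"
    using measure_pmf.prob_compl[of "{s}" \<mu>] by (simp add: measure_pmf_single Compl_eq_Diff_UNIV)
  moreover have "pmf \<mu> s > 0"
    using s by (simp add: pmf_positive)
  ultimately have "measure ?M Z = 0"
    by (simp add: algebra_simps)
  then have "Z \<in> null_sets ?M"
    using Z_sets by (simp add: S.emeasure_eq_measure null_sets_def)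
  then show ?thesis
    by (rule AE_I') (auto simp: Z_def)
qed

lemma AE_stream_space_visits_after:
  fixes \<mu> :: "'a pmf"
  assumes s: "s \<in> set_pmf \<mu>"
  shows "AE \<omega> in stream_space (measure_pmf \<mu>). \<exists>k\<ge>n. \<omega> !! k = s"
proof (induction n)
  case 0
  then show ?case using AE_stream_space_visits[OF s] by simp
next
  case (Suc n)
  have pred: "Measurable.pred (stream_space (measure_pmf \<mu>)) (\<lambda>\<omega>. \<exists>k\<ge>Suc n. \<omega> !! k = s)"
    by measurable
  have "AE \<omega> in stream_space (measure_pmf \<mu>). \<exists>k\<ge>Suc n. (x ## \<omega>) !! k = s" for x
    using Suc.IH by eventually_elim (metis Suc_le_mono snth_Stream)
  then show ?case
    by (subst prob_space.AE_stream_space[OF prob_space_measure_pmf pred]) simp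
qed

lemma AE_stream_space_visits_support_after:
  fixes \<mu> :: "'a pmf"
  shows "AE \<omega> in stream_space (measure_pmf \<mu>). \<forall>s\<in>set_pmf \<mu>. \<exists>k\<ge>n. \<omega> !! k = s"
  by (rule AE_ball_countable') (auto intro: AE_stream_space_visits_after)

lemma (in monoid) foldr_mult_closed:
  "set xs \<subseteq> carrier G \<Longrightarrow> foldr (\<lambda>x y. x \<otimes> y) xs \<one> \<in> carrier G"
  by (induction xs) simp_all

lemma (in monoid) foldr_mult_eq_mult:
  assumes "set xs \<subseteq> carrier G" "a \<in> carrier G"
  shows "foldr (\<lambda>x y. x \<otimes> y) xs a = foldr (\<lambda>x y. x \<otimes> y) xs \<one> \<otimes> a"
  using assms(1)
proof (induction xs)
  case Nil
  then show ?case using assms(2) by simp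
next
  case (Cons x xs)
  then show ?case using assms(2) foldr_mult_closed by (simp add: m_assoc)
qed

lemma (in monoid) rw_pos_closed:
  assumes "\<forall>k. \<omega> !! k \<in> carrier G"
  shows "rw_pos G \<omega> i \<in> carrier G"
proof -
  have "set (stake i \<omega>) \<subseteq> carrier G"
    using assms by (auto simp: in_set_conv_nth)
  then show ?thesis
    unfolding rw_pos_def by (rule foldr_mult_closed)
qed

lemma (in monoid) rw_pos_Suc:
  assumes "\<forall>k. \<omega> !! k \<in> carrier G"
  shows "rw_pos G \<omega> (Suc i) = rw_pos G \<omega> i \<otimes> \<omega> !! i"
proof -
  have "set (stake i \<omega>) \<subseteq> carrier G"
    using assms by (auto simp: in_set_conv_nth)
  then show ?thesis
    using assms foldr_mult_eq_mult[of "stake i \<omega>" "\<omega> !! i"]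
    unfolding rw_pos_def stake_Suc by simp
qed

lemma (in group) rw_pos_increment:
  assumes "\<forall>k. \<omega> !! k \<in> carrier G"
  shows "\<omega> !! i = inv (rw_pos G \<omega> i) \<otimes> rw_pos G \<omega> (Suc i)"
proof -
  have "rw_pos G \<omega> i \<in> carrier G" "\<omega> !! i \<in> carrier G"
    using assms rw_pos_closed by auto
  then show ?thesis
    using assms rw_pos_Suc by (simp add: m_assoc[symmetric])
qed

lemma (in monoid) semigroup_gen_subset:
  assumes "S \<subseteq> carrier G"
  shows "semigroup_gen G S \<subseteq> carrier G"
proof
  fix x assume "x \<in> semigroup_gen G S"
  then show "x \<in> carrier G"
  proof (induction rule: semigroup_gen.induct)
    case (base x)
    then show ?case using assms by blast
  next
    case (mult x y)
    then show ?case by simp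
  qed
qed

lemma (in group) semigroup_gen_inv_closed:
  assumes "S \<subseteq> carrier G" "\<forall>x\<in>S. inv x \<in> semigroup_gen G S"
    and "x \<in> semigroup_gen G S"
  shows "inv x \<in> semigroup_gen G S"
  using assms(3)
proof (induction rule: semigroup_gen.induct)
  case (base x)
  then show ?case using assms(2) by blast
next
  case (mult x y)
  have "x \<in> carrier G" "y \<in> carrier G"
    using mult.hyps semigroup_gen_subset[OF assms(1)] by blast+
  then have "inv (x \<otimes> y) = inv y \<otimes> inv x"
    by (rule inv_mult_group)
  then show ?case
    using semigroup_gen.mult[OF mult.IH(2,1)] by simp
qed

lemma (in group) subgroup_semigroup_gen:
  assumes "S \<subseteq> carrier G" "S \<noteq> {}" "\<forall>x\<in>S. inv x \<in> semigroup_gen G S"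
  shows "subgroup (semigroup_gen G S) G"
proof (rule subgroupI)
  show "semigroup_gen G S \<subseteq> carrier G"
    by (rule semigroup_gen_subset[OF assms(1)])
  show "semigroup_gen G S \<noteq> {}"
  proof -
    obtain x where "x \<in> S" using assms(2) by blast
    then show ?thesis using semigroup_gen.base by (metis empty_iff)
  qed
  show "inv x \<in> semigroup_gen G S" if "x \<in> semigroup_gen G S" for x
    by (rule semigroup_gen_inv_closed[OF assms(1,3) that])
  show "x \<otimes> y \<in> semigroup_gen G S" if "x \<in> semigroup_gen G S" "y \<in> semigroup_gen G S" for x y
    by (rule semigroup_gen.mult[OF that])
qed

lemma (in group) tail_semigroup_eq_carrier:
  assumes stream_carrier: "\<forall>k. \<omega> !! k \<in> carrier G"
    and gen: "generate G A = carrier G"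
    and visits: "\<forall>s\<in>A. \<exists>k\<ge>n. \<omega> !! k = s"
    and inv_closed: "\<forall>i\<ge>n. inv (rw_pos G \<omega> i) \<in> tail_semigroup G \<omega> n"
  shows "tail_semigroup G \<omega> n = carrier G"
proof -
  define P where "P = {rw_pos G \<omega> i | i. i \<ge> n}"
  have S_def: "tail_semigroup G \<omega> n = semigroup_gen G P"
    unfolding P_def tail_semigroup_def ..
  have P_carrier: "P \<subseteq> carrier G"
    unfolding P_def using rw_pos_closed[OF stream_carrier] by blast
  have pos_in_S: "rw_pos G \<omega> i \<in> semigroup_gen G P" if "i \<ge> n" for i
    using that unfolding P_def by (auto intro: semigroup_gen.base)
  have "P \<noteq> {}" "\<forall>x\<in>P. inv x \<in> semigroup_gen G P"
    using inv_closed unfolding P_def S_def by auto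
  then have subgroup: "subgroup (semigroup_gen G P) G"
    by (intro subgroup_semigroup_gen P_carrier)
  have increment_in_S: "\<omega> !! k \<in> semigroup_gen G P" if "k \<ge> n" for k
    using rw_pos_increment[OF stream_carrier, of k] that pos_in_S[of "Suc k"]
      semigroup_gen.mult[OF subgroup.m_inv_closed[OF subgroup pos_in_S[OF that]]]
    by simp
  have "A \<subseteq> semigroup_gen G P"
    using visits increment_in_S by fastforce
  then have "carrier G \<subseteq> semigroup_gen G P"
    using generate_subgroup_incl[OF _ subgroup] gen by metis
  with semigroup_gen_subset[OF P_carrier] show ?thesis
    unfolding S_def by (rule equalityI)
qed

theorem lemma1:
  fixes G :: "('a, 'b) monoid_scheme" and \<mu> :: "'a pmf" and n :: nat
  assumes "group G"
    and "countable (carrier G)"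
    and "set_pmf \<mu> \<subseteq> carrier G"
    and "\<forall>g \<in> carrier G. pmf \<mu> (inv\<^bsub>G\<^esub> g) = pmf \<mu> g"
    and "generate G (set_pmf \<mu>) = carrier G"
    and "n \<ge> 1"
    and "AE \<omega> in stream_space (measure_pmf \<mu>).
           \<forall>i \<ge> n. inv\<^bsub>G\<^esub> (rw_pos G \<omega> i) \<in> tail_semigroup G \<omega> n"
  shows "AE \<omega> in stream_space (measure_pmf \<mu>). tail_semigroup G \<omega> n = carrier G"
proof -
  have "AE \<omega> in stream_space (measure_pmf \<mu>). stream_all (\<lambda>x. x \<in> set_pmf \<mu>) \<omega>"
    by (rule prob_space.AE_stream_all[OF prob_space_measure_pmf]) (auto simp: AE_measure_pmf)
  with AE_stream_space_visits_support_after[of \<mu> n] assms(7) show ?thesis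
  proof eventually_elim
    case (elim \<omega>)
    then have "\<forall>k. \<omega> !! k \<in> carrier G"
      using assms(3) by (auto simp: stream_all_def)
    with elim show ?case
      using group.tail_semigroup_eq_carrier[OF assms(1) _ assms(5)] by blast
  qed
qed

end
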